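(* Let $\mathcal X\subseteq\Delta_d$ be convex, let $\ell_1,\dots,\ell_T\in[0,1]^d$, and let $R:\mathcal X\to\mathbb R$ be a regularizer that is $1$-strongly convex with respect to a norm $\|\cdot\|$, with dual norm $\|\cdot\|_*$. Run optimistic online mirror descent (OOMD) with learning rate $\eta>0$ on the losses $\ell_t$. Then for any $x^\star\in\mathcal X$ and any nonnegative weights $q_1,\dots,q_{T+1}$, $$\sum_{t=1}^Tq_t\langle x_t-x^\star,\ell_t\rangle\le\frac{q_1D_R(x^\star,\tilde x_0)}{\eta}+\frac1\eta\sum_{t=1}^T(q_{t+1}-q_t)D_R(x^\star,\tilde x_t)+\frac\eta2\sum_{t=1}^Tq_t\|\ell_t-\tilde\ell_t\|_*^2.$$
   Context: OOMD: $\tilde x_0=\arg\min_{x\in\mathcal X}R(x)$; for $t=1,\dots,T$: $x_t=\arg\min_{x\in\mathcal X}\{\langle\tilde\ell_t,x\rangle+\frac1\eta D_R(x,\tilde x_{t-1})\}$ and $\tilde x_t=\arg\min_{x\in\mathcal X}\{\langle\ell_t,x\rangle+\frac1\eta D_R(x,\tilde x_{t-1})\}$, where $\tilde\ell_1=0$ and $\tilde\ell_t=\ell_{t-1}$ for $t\ge2$. $D_R(x,y)=R(x)-R(y)-\langle\nabla R(y),x-y\rangle$ is the Bregman divergence. *)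

theory Defs
  imports "HOL-Analysis.Analysis"
begin

definition prob_simplex :: "(real ^ 'd) set" where
  "prob_simplex = {x. (\<forall>i. 0 \<le> x $ i) \<and> (\<Sum>i\<in>UNIV. x $ i) = 1}"

definition is_norm :: "(real ^ 'd \<Rightarrow> real) \<Rightarrow> bool" where
  "is_norm N \<longleftrightarrow> (\<forall>x. 0 \<le> N x) \<and> (\<forall>x. N x = 0 \<longleftrightarrow> x = 0)
     \<and> (\<forall>c x. N (c *\<^sub>R x) = \<bar>c\<bar> * N x) \<and> (\<forall>x y. N (x + y) \<le> N x + N y)"

definition dual_norm :: "(real ^ 'd \<Rightarrow> real) \<Rightarrow> real ^ 'd \<Rightarrow> real" where
  "dual_norm N y = Sup {y \<bullet> x | x. N x \<le> 1}"

definition strongly_convex_on :: "(real ^ 'd) set \<Rightarrow> (real ^ 'd \<Rightarrow> real) \<Rightarrow> (real ^ 'd \<Rightarrow> real) \<Rightarrow> bool" where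
  "strongly_convex_on X N R \<longleftrightarrow> (\<forall>x\<in>X. \<forall>y\<in>X. \<forall>u::real. 0 \<le> u \<and> u \<le> 1 \<longrightarrow>
     R (u *\<^sub>R x + (1 - u) *\<^sub>R y) \<le> u * R x + (1 - u) * R y - u * (1 - u) / 2 * (N (x - y))\<^sup>2)"

definition bregman :: "(real ^ 'd \<Rightarrow> real) \<Rightarrow> (real ^ 'd \<Rightarrow> real ^ 'd) \<Rightarrow> real ^ 'd \<Rightarrow> real ^ 'd \<Rightarrow> real" where
  "bregman R gR x y = R x - R y - gR y \<bullet> (x - y)"

text \<open>Optimistic loss predictions: tilde-ell_1 = 0, tilde-ell_t = ell_(t-1).\<close>
definition opt_loss :: "(nat \<Rightarrow> real ^ 'd) \<Rightarrow> nat \<Rightarrow> real ^ 'd" where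
  "opt_loss l t = (if t \<le> 1 then 0 else l (t - 1))"

definition oomd :: "(real ^ 'd) set \<Rightarrow> (real ^ 'd \<Rightarrow> real) \<Rightarrow> (real ^ 'd \<Rightarrow> real ^ 'd) \<Rightarrow> real
    \<Rightarrow> (nat \<Rightarrow> real ^ 'd) \<Rightarrow> nat \<Rightarrow> (nat \<Rightarrow> real ^ 'd) \<Rightarrow> (nat \<Rightarrow> real ^ 'd) \<Rightarrow> bool" where
  "oomd X R gR \<eta> l T x xt \<longleftrightarrow>
     is_arg_min R (\<lambda>z. z \<in> X) (xt 0) \<and>
     (\<forall>t\<in>{1..T}.
        is_arg_min (\<lambda>z. opt_loss l t \<bullet> z + bregman R gR z (xt (t - 1)) / \<eta>) (\<lambda>z. z \<in> X) (x t) \<and>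
        is_arg_min (\<lambda>z. l t \<bullet> z + bregman R gR z (xt (t - 1)) / \<eta>) (\<lambda>z. z \<in> X) (xt t))"

end

theory Submission
  imports Defs
begin

text \<open>Write \<open>c(t)\<close> for the centres \<open>x~\<^sub>t\<close> and \<open>m(t)\<close> for the predictions \<open>\<ell>~\<^sub>t\<close>.
  Round \<open>t\<close> solves two proximal problems centred at \<open>c(t-1)\<close>, with linear terms \<open>m(t)\<close>
  (giving \<open>x\<^sub>t\<close>) and \<open>\<ell>\<^sub>t\<close> (giving \<open>c(t)\<close>). Their first-order optimality conditions are
  three-point inequalities for \<open>D = D\<^sub>R\<close>; together they bound \<open>\<langle>x\<^sub>t - x\<^sup>\<star>, \<ell>\<^sub>t\<rangle>\<close> by
  \<open>(D(x\<^sup>\<star>, c(t-1)) - D(x\<^sup>\<star>, c(t))) / \<eta> + \<langle>\<ell>\<^sub>t - m(t), x\<^sub>t - c(t)\<rangle> - D(c(t), x\<^sub>t) / \<eta>\<close>.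
  The inner product is at most \<open>\<parallel>\<ell>\<^sub>t - m(t)\<parallel>\<^sub>* \<parallel>x\<^sub>t - c(t)\<parallel>\<close>; by \<open>2ab \<le> a\<^sup>2 + b\<^sup>2\<close> it splits
  into \<open>\<eta>/2 \<parallel>\<ell>\<^sub>t - m(t)\<parallel>\<^sub>*\<^sup>2\<close> plus a term absorbed by strong convexity,
  \<open>D(u, v) \<ge> \<parallel>u - v\<parallel>\<^sup>2 / 2\<close>. Weighting round \<open>t\<close> by \<open>q\<^sub>t\<close> and summing by parts gives the
  claim after dropping \<open>-q\<^sub>T\<^sub>+\<^sub>1 D(x\<^sup>\<star>, c(T)) / \<eta> \<le> 0\<close>.\<close>

lemma is_norm_minus:
  assumes "is_norm N" shows "N (- v) = N v"
proof -
  have "N ((- 1) *\<^sub>R v) = \<bar>- 1\<bar> * N v" using assms unfolding is_norm_def by blast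
  then show ?thesis by simp
qed

lemma convex_on_is_norm:
  assumes "is_norm N" shows "convex_on UNIV N"
proof (rule convex_onI)
  fix t :: real and x y assume t: "0 < t" "t < 1"
  have "N ((1 - t) *\<^sub>R x + t *\<^sub>R y) \<le> N ((1 - t) *\<^sub>R x) + N (t *\<^sub>R y)"
    using assms unfolding is_norm_def by blast
  also have "\<dots> = (1 - t) * N x + t * N y"
    using assms t unfolding is_norm_def by simp
  finally show "N ((1 - t) *\<^sub>R x + t *\<^sub>R y) \<le> (1 - t) * N x + t * N y" .
qed simp

text \<open>One half of the equivalence of norms on \<open>\<real>\<^sup>d\<close>: \<open>N\<close> attains a positive minimum on the
  Euclidean unit sphere, being continuous as a convex function.\<close>

lemma is_norm_ge_scaled_norm:
  fixes N :: "real ^ 'd \<Rightarrow> real"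
  assumes "is_norm N" obtains c where "c > 0" "\<And>x. c * norm x \<le> N x"
proof -
  have cont: "continuous_on (sphere 0 1) N"
    using convex_on_continuous[OF open_UNIV convex_on_is_norm[OF assms]] continuous_on_subset
    by blast
  have "sphere (0 :: real ^ 'd) 1 \<noteq> {}" by simp
  then obtain m where m: "m \<in> sphere 0 1" "\<And>y. y \<in> sphere 0 1 \<Longrightarrow> N m \<le> N y"
    using continuous_attains_inf[OF compact_sphere _ cont] by blast
  have pos: "N m > 0"
    using assms m(1) unfolding is_norm_def by (metis less_eq_real_def norm_zero mem_sphere_0 zero_neq_one)
  have "N m * norm x \<le> N x" for x
  proof (cases "x = 0")
    case True then show ?thesis using assms unfolding is_norm_def by simp
  next
    case False
    have "N x = N (norm x *\<^sub>R (x /\<^sub>R norm x))" using False by simp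
    also have "\<dots> = norm x * N (x /\<^sub>R norm x)" using assms unfolding is_norm_def by simp
    finally show ?thesis
      using m(2)[of "x /\<^sub>R norm x"] False by (simp add: mult.commute mult_left_mono)
  qed
  with pos that show ?thesis by blast
qed

lemma inner_le_dual_norm_mult:
  fixes N :: "real ^ 'd \<Rightarrow> real"
  assumes "is_norm N" shows "y \<bullet> x \<le> dual_norm N y * N x"
proof -
  obtain c where c: "c > 0" "\<And>x. c * norm x \<le> N x"
    using is_norm_ge_scaled_norm[OF assms] by blast
  have bdd: "bdd_above {y \<bullet> x | x. N x \<le> 1}"
  proof (rule bdd_aboveI)
    fix v assume "v \<in> {y \<bullet> x | x. N x \<le> 1}"
    then obtain z where z: "v = y \<bullet> z" "N z \<le> 1" by blast
    have "norm z \<le> 1 / c" using c z(2) order_trans[OF c(2)] by (simp add: field_simps)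
    then have "norm y * norm z \<le> norm y * (1 / c)" by (intro mult_left_mono) auto
    moreover have "v \<le> norm y * norm z" using z(1) Cauchy_Schwarz_ineq2 by (metis abs_le_D1)
    ultimately show "v \<le> norm y * (1 / c)" by linarith
  qed
  show ?thesis
  proof (cases "x = 0")
    case True
    moreover have "N 0 = 0" using assms unfolding is_norm_def by blast
    ultimately show ?thesis by simp
  next
    case False
    then have pos: "N x > 0" using assms unfolding is_norm_def by (metis less_eq_real_def)
    have "N (x /\<^sub>R N x) = inverse (N x) * N x" using assms pos unfolding is_norm_def by simp
    then have "N (x /\<^sub>R N x) = 1" using pos by simp
    then have "y \<bullet> (x /\<^sub>R N x) \<le> dual_norm N y"
      unfolding dual_norm_def by (intro cSup_upper[OF _ bdd]) (auto intro!: exI[of _ "x /\<^sub>R N x"])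
    then show ?thesis using pos by (simp add: field_simps)
  qed
qed

lemma convex_add_scaled_diff_mem:
  assumes "convex X" "a \<in> X" "z \<in> X" "0 \<le> u" "u \<le> 1"
  shows "a + u *\<^sub>R (z - a) \<in> X"
proof -
  have "a + u *\<^sub>R (z - a) = (1 - u) *\<^sub>R a + u *\<^sub>R z" by (simp add: algebra_simps)
  then show ?thesis using assms convex_alt by metis
qed

lemma difference_quotient_along_segment_tendsto:
  fixes R :: "'a::real_inner \<Rightarrow> real"
  assumes "convex X" "\<forall>y\<in>X. (R has_derivative (\<lambda>h. gR y \<bullet> h)) (at y within X)"
    and "a \<in> X" "z \<in> X"
  shows "((\<lambda>u. (R (a + u *\<^sub>R (z - a)) - R a) / u) \<longlongrightarrow> gR a \<bullet> (z - a)) (at_right 0)"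
proof -
  have segment: "((\<lambda>u. a + u *\<^sub>R (z - a)) has_derivative (\<lambda>h. h *\<^sub>R (z - a))) (at 0 within {0..1})"
    by (auto intro!: derivative_eq_intros)
  have "(\<lambda>u. a + u *\<^sub>R (z - a)) ` {0..1} \<subseteq> X"
    using convex_add_scaled_diff_mem[OF assms(1,3,4)] by auto
  then have "((\<lambda>u. R (a + u *\<^sub>R (z - a))) has_derivative (\<lambda>h. gR a \<bullet> (h *\<^sub>R (z - a))))
      (at 0 within {0..1})"
    using has_derivative_in_compose2[of X R "\<lambda>y h. gR y \<bullet> h", OF _ _ _ segment] assms(2)
    by auto
  then have "((\<lambda>u. R (a + u *\<^sub>R (z - a))) has_real_derivative gR a \<bullet> (z - a)) (at 0 within {0..1})"
    by (simp add: has_field_derivative_def mult.commute[of _ "gR a \<bullet> (z - a)"])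
  then show ?thesis
    by (simp add: has_field_derivative_iff at_within_Icc_at_right)
qed

lemma bregman_ge_half_sq_norm:
  fixes R :: "real ^ 'd \<Rightarrow> real"
  assumes "convex X" "\<forall>y\<in>X. (R has_derivative (\<lambda>h. gR y \<bullet> h)) (at y within X)"
    and "strongly_convex_on X N R" "x \<in> X" "y \<in> X"
  shows "(N (x - y))\<^sup>2 / 2 \<le> bregman R gR x y"
proof -
  define K where "K = (N (x - y))\<^sup>2"
  have quotient_le: "(R (y + u *\<^sub>R (x - y)) - R y) / u \<le> R x - R y - (1 - u) / 2 * K"
    if u: "0 < u" "u \<le> 1" for u
  proof -
    have "y + u *\<^sub>R (x - y) = u *\<^sub>R x + (1 - u) *\<^sub>R y" by (simp add: algebra_simps)
    moreover have "R (u *\<^sub>R x + (1 - u) *\<^sub>R y) \<le> u * R x + (1 - u) * R y - u * (1 - u) / 2 * K"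
      using assms(3,4,5) u unfolding strongly_convex_on_def K_def by auto
    ultimately have "R (y + u *\<^sub>R (x - y)) - R y \<le> u * (R x - R y - (1 - u) / 2 * K)"
      by (simp add: algebra_simps)
    then show ?thesis using u by (simp add: divide_le_eq mult.commute)
  qed
  have "gR y \<bullet> (x - y) \<le> R x - R y - (1 - 0) / 2 * K"
  proof (rule tendsto_le[OF _ _ difference_quotient_along_segment_tendsto[OF assms(1,2,5,4)]])
    show "((\<lambda>u. R x - R y - (1 - u) / 2 * K) \<longlongrightarrow> R x - R y - (1 - 0) / 2 * K) (at_right 0)"
      by (intro tendsto_intros) simp
    show "\<forall>\<^sub>F u in at_right 0. (R (y + u *\<^sub>R (x - y)) - R y) / u \<le> R x - R y - (1 - u) / 2 * K"
      unfolding eventually_at_right_field using quotient_le by (intro exI[of _ 1]) auto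
  qed simp
  then show ?thesis unfolding bregman_def K_def by simp
qed

lemma bregman_three_point:
  "bregman R gR z y - bregman R gR z a - bregman R gR a y = (gR a - gR y) \<bullet> (z - a)"
  unfolding bregman_def by (simp add: algebra_simps inner_diff_right inner_diff_left)

lemma arg_min_bregman_three_point:
  fixes R :: "real ^ 'd \<Rightarrow> real"
  assumes "convex X" "\<forall>y\<in>X. (R has_derivative (\<lambda>h. gR y \<bullet> h)) (at y within X)"
    and "\<eta> > 0" "is_arg_min (\<lambda>z. v \<bullet> z + bregman R gR z y / \<eta>) (\<lambda>z. z \<in> X) a" "z \<in> X"
  shows "\<eta> * (v \<bullet> (a - z)) \<le> bregman R gR z y - bregman R gR z a - bregman R gR a y"
proof -
  have aX: "a \<in> X" using assms(4) unfolding is_arg_min_def by blast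
  have quotient_ge: "gR y \<bullet> (z - a) - \<eta> * (v \<bullet> (z - a)) \<le> (R (a + u *\<^sub>R (z - a)) - R a) / u"
    if u: "0 < u" "u \<le> 1" for u
  proof -
    define w where "w = a + u *\<^sub>R (z - a)"
    have "w \<in> X" unfolding w_def using convex_add_scaled_diff_mem[OF assms(1) aX assms(5)] u by simp
    then have "v \<bullet> a + bregman R gR a y / \<eta> \<le> v \<bullet> w + bregman R gR w y / \<eta>"
      using assms(4) unfolding is_arg_min_def by (meson not_less)
    then have "\<eta> * (v \<bullet> a + bregman R gR a y / \<eta>) \<le> \<eta> * (v \<bullet> w + bregman R gR w y / \<eta>)"
      using assms(3) by (intro mult_left_mono) auto
    then have "\<eta> * (v \<bullet> a) + bregman R gR a y \<le> \<eta> * (v \<bullet> w) + bregman R gR w y"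
      using assms(3) by (simp add: distrib_left)
    then have "u * (gR y \<bullet> (z - a) - \<eta> * (v \<bullet> (z - a))) \<le> R w - R a"
      unfolding bregman_def w_def by (simp add: algebra_simps inner_diff_right inner_add_right)
    then show ?thesis using u unfolding w_def by (simp add: le_divide_eq mult.commute)
  qed
  have "gR y \<bullet> (z - a) - \<eta> * (v \<bullet> (z - a)) \<le> gR a \<bullet> (z - a)"
  proof (rule tendsto_le[OF _ difference_quotient_along_segment_tendsto[OF assms(1,2) aX assms(5)]])
    show "\<forall>\<^sub>F u in at_right 0. gR y \<bullet> (z - a) - \<eta> * (v \<bullet> (z - a)) \<le> (R (a + u *\<^sub>R (z - a)) - R a) / u"
      unfolding eventually_at_right_field using quotient_ge by (intro exI[of _ 1]) auto
  qed auto
  then show ?thesis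
    unfolding bregman_three_point by (simp add: algebra_simps inner_diff_right inner_diff_left)
qed

lemma bregman_nonneg:
  fixes R :: "real ^ 'd \<Rightarrow> real"
  assumes "convex X" "\<forall>y\<in>X. (R has_derivative (\<lambda>h. gR y \<bullet> h)) (at y within X)"
    and "strongly_convex_on X N R" "x \<in> X" "y \<in> X"
  shows "0 \<le> bregman R gR x y"
  using bregman_ge_half_sq_norm[OF assms] zero_le_power2[of "N (x - y)"] by linarith

lemma optimistic_step_regret_le:
  fixes R :: "real ^ 'd \<Rightarrow> real"
  assumes "convex X" "\<forall>y\<in>X. (R has_derivative (\<lambda>h. gR y \<bullet> h)) (at y within X)"
    and "strongly_convex_on X N R" "is_norm N" "\<eta> > 0"
    and "is_arg_min (\<lambda>z. m \<bullet> z + bregman R gR z c / \<eta>) (\<lambda>z. z \<in> X) a"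
    and "is_arg_min (\<lambda>z. g \<bullet> z + bregman R gR z c / \<eta>) (\<lambda>z. z \<in> X) b"
    and "c \<in> X" "u \<in> X"
  shows "(a - u) \<bullet> g \<le> (bregman R gR u c - bregman R gR u b) / \<eta> + \<eta> / 2 * (dual_norm N (g - m))\<^sup>2"
proof -
  let ?D = "bregman R gR" and ?n = "N (a - b)" and ?dn = "dual_norm N (g - m)"
  have aX: "a \<in> X" using assms(6) unfolding is_arg_min_def by blast
  have bX: "b \<in> X" using assms(7) unfolding is_arg_min_def by blast
  have update: "\<eta> * (g \<bullet> (b - u)) \<le> ?D u c - ?D u b - ?D b c"
    by (rule arg_min_bregman_three_point[OF assms(1,2,5,7,9)])
  have prediction: "\<eta> * (m \<bullet> (a - b)) \<le> ?D b c - ?D b a - ?D a c"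
    by (rule arg_min_bregman_three_point[OF assms(1,2,5,6) bX])
  have "\<eta> * ((g - m) \<bullet> (a - b)) \<le> \<eta> * (?dn * ?n)"
    using inner_le_dual_norm_mult[OF assms(4)] assms(5) by (intro mult_left_mono) auto
  also have "\<dots> \<le> ((\<eta> * ?dn)\<^sup>2 + ?n\<^sup>2) / 2"
    using sum_squares_bound[of "\<eta> * ?dn" ?n] by simp
  finally have "\<eta> * ((g - m) \<bullet> (a - b)) \<le> ((\<eta> * ?dn)\<^sup>2 + ?n\<^sup>2) / 2" .
  moreover have "?n\<^sup>2 / 2 \<le> ?D b a"
    using bregman_ge_half_sq_norm[OF assms(1-3) bX aX] is_norm_minus[OF assms(4), of "a - b"] by simp
  moreover have "0 \<le> ?D a c" by (rule bregman_nonneg[OF assms(1-3) aX assms(8)])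
  moreover have "(a - u) \<bullet> g = (g - m) \<bullet> (a - b) + m \<bullet> (a - b) + g \<bullet> (b - u)"
    by (simp add: inner_diff_left inner_diff_right inner_commute)
  ultimately have "\<eta> * ((a - u) \<bullet> g) \<le> ?D u c - ?D u b + \<eta>\<^sup>2 / 2 * ?dn\<^sup>2"
    using update prediction by (simp add: distrib_left power_mult_distrib)
  then show ?thesis using assms(5) by (simp add: field_simps power2_eq_square)
qed

lemma sum_weighted_telescope:
  fixes q D :: "nat \<Rightarrow> 'a::comm_ring"
  shows "(\<Sum>t=1..T. q t * (D (t - 1) - D t))
    = q 1 * D 0 + (\<Sum>t=1..T. (q (t + 1) - q t) * D t) - q (T + 1) * D T"
  by (induction T) (auto simp: algebra_simps)

lemma weighted_sum_le_by_telescoping: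
  fixes r e q D :: "nat \<Rightarrow> real"
  assumes "\<forall>t\<in>{1..T}. r t \<le> (D (t - 1) - D t) / \<eta> + \<eta> / 2 * e t"
    and "\<forall>t\<in>{1..T+1}. 0 \<le> q t" "0 \<le> D T" "\<eta> > 0"
  shows "(\<Sum>t=1..T. q t * r t)
    \<le> q 1 * D 0 / \<eta> + (1 / \<eta>) * (\<Sum>t=1..T. (q (t + 1) - q t) * D t)
       + (\<eta> / 2) * (\<Sum>t=1..T. q t * e t)"
proof -
  have "(\<Sum>t=1..T. q t * r t) \<le> (\<Sum>t=1..T. q t * ((D (t - 1) - D t) / \<eta> + \<eta> / 2 * e t))"
    using assms(1,2) by (intro sum_mono mult_left_mono) auto
  also have "\<dots> = (1 / \<eta>) * (\<Sum>t=1..T. q t * (D (t - 1) - D t)) + (\<eta> / 2) * (\<Sum>t=1..T. q t * e t)"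
  proof -
    have "q t * ((D (t - 1) - D t) / \<eta> + \<eta> / 2 * e t)
        = (1 / \<eta>) * (q t * (D (t - 1) - D t)) + (\<eta> / 2) * (q t * e t)" for t
      by (simp add: algebra_simps diff_divide_distrib)
    then show ?thesis by (simp only: sum.distrib sum_distrib_left)
  qed
  also have "\<dots> = (1 / \<eta>) * (q 1 * D 0 + (\<Sum>t=1..T. (q (t + 1) - q t) * D t) - q (T + 1) * D T)
      + (\<eta> / 2) * (\<Sum>t=1..T. q t * e t)"
    by (simp only: sum_weighted_telescope)
  also have "\<dots> \<le> (1 / \<eta>) * (q 1 * D 0 + (\<Sum>t=1..T. (q (t + 1) - q t) * D t))
      + (\<eta> / 2) * (\<Sum>t=1..T. q t * e t)"
    using assms(2-4) by (intro add_right_mono mult_left_mono) auto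
  finally show ?thesis by (simp add: algebra_simps)
qed

theorem lemma3:
  fixes X :: "(real ^ 'd) set"
    and R :: "real ^ 'd \<Rightarrow> real" and gR :: "real ^ 'd \<Rightarrow> real ^ 'd"
    and N :: "real ^ 'd \<Rightarrow> real"
    and \<eta> :: real and T :: nat
    and l x xt :: "nat \<Rightarrow> real ^ 'd"
    and q :: "nat \<Rightarrow> real" and xstar :: "real ^ 'd"
  assumes "convex X" and "X \<subseteq> prob_simplex"
    and "\<forall>t\<in>{1..T}. \<forall>i. 0 \<le> l t $ i \<and> l t $ i \<le> 1"
    and "is_norm N"
    and "\<forall>y\<in>X. (R has_derivative (\<lambda>h. gR y \<bullet> h)) (at y within X)"
    and "strongly_convex_on X N R"
    and "\<eta> > 0"
    and "oomd X R gR \<eta> l T x xt"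
    and "xstar \<in> X"
    and "\<forall>t\<in>{1..T+1}. 0 \<le> q t"
  shows "(\<Sum>t=1..T. q t * ((x t - xstar) \<bullet> l t))
    \<le> q 1 * bregman R gR xstar (xt 0) / \<eta>
       + (1 / \<eta>) * (\<Sum>t=1..T. (q (t + 1) - q t) * bregman R gR xstar (xt t))
       + (\<eta> / 2) * (\<Sum>t=1..T. q t * (dual_norm N (l t - opt_loss l t))\<^sup>2)"
proof -
  note regularizer = assms(1,5,6)
  have oomd_steps: "is_arg_min (\<lambda>z. opt_loss l t \<bullet> z + bregman R gR z (xt (t - 1)) / \<eta>) (\<lambda>z. z \<in> X) (x t)"
      "is_arg_min (\<lambda>z. l t \<bullet> z + bregman R gR z (xt (t - 1)) / \<eta>) (\<lambda>z. z \<in> X) (xt t)"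
    if "t \<in> {1..T}" for t
    using assms(8) that unfolding oomd_def by blast+
  have centres_in: "xt t \<in> X" if "t \<le> T" for t
  proof (cases "t = 0")
    case True then show ?thesis using assms(8) unfolding oomd_def is_arg_min_def by blast
  next
    case False then show ?thesis using oomd_steps(2)[of t] that unfolding is_arg_min_def by auto
  qed
  show ?thesis
  proof (rule weighted_sum_le_by_telescoping[where D = "\<lambda>t. bregman R gR xstar (xt t)"])
    show "\<forall>t\<in>{1..T}. (x t - xstar) \<bullet> l t \<le> (bregman R gR xstar (xt (t - 1)) - bregman R gR xstar (xt t)) / \<eta>
        + \<eta> / 2 * (dual_norm N (l t - opt_loss l t))\<^sup>2"
      using optimistic_step_regret_le[OF regularizer assms(4,7) oomd_steps _ assms(9)] centres_in
      by auto
    show "0 \<le> bregman R gR xstar (xt T)"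
      by (rule bregman_nonneg[OF regularizer assms(9) centres_in]) simp
  qed (use assms(7,10) in auto)
qed

end
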